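(* Under the first-order dynamical system $$\dot{x}^{(1)}_k=2\lambda(x_{k-1}+s^{*}_{k-1})x^{(1)}_{k-1}-2\lambda(x_k+s^{*}_k)x^{(1)}_k-x^{(1)}_k+x^{(1)}_{k+1},\qquad 1\le k\le b,$$ with $x^{(1)}_0=x^{(1)}_{b+1}\equiv 0$ and initial condition $x^{(1)}(0)=N(z-y)$, we have for all $t\ge 0$ $$|x^{(1)}(t)|\le |x^{(1)}(0)|=1.$$
   Context: Setting: a system of $N$ servers, each with buffer size $b=O(\log N)$, Poisson arrivals of rate $\lambda N$ with $\lambda=1-\gamma/N^{\alpha}$ ($0<\gamma\le 1$, $\alpha>0$), i.i.d. exponential service times of rate one, and the power-of-two-choices dispatching rule. $s_k$ is the fraction of servers with at least $k$ jobs ($s_0=1$, $s_{b+1}=0$), and $s^{*}=(s^*_1,\dots,s^*_b)$ is the unique equilibrium of the mean-field model $\dot s_k=\lambda(s_{k-1}^2-s_k^2)-(s_k-s_{k+1})$ for $1\le k\le b-1$, $\dot s_b=\lambda(s_{b-1}^2-s_b^2)-s_b$. Let $x=s-s^{*}$ and let $x(t)$ denote the trajectory of the centered mean-field dynamics $\dot x=f(x)$ (the mean-field model written in the variable $x=s-s^*$), so that $s_k(t)=x_k(t)+s^*_k\ge 0$ for all $t\ge 0$ and all $k$. The system for $x^{(1)}$ in the claim is the linearization (first-order/variational system) of these dynamics along the trajectory $x(t)$. Here $z,y$ are states such that the transition rate from $z$ to $y$ is nonzero, so $z-y$ has exactly one nonzero entry equal to $\pm 1/N$, hence $x^{(1)}(0)=N(z-y)$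 has a single entry $\pm1$. Throughout, $|v|=\sum_{k=1}^b|v_k|$ denotes the 1-norm. *)

theory Defs
  imports "HOL-Analysis.Analysis"
begin

definition ext_s :: "nat \<Rightarrow> (nat \<Rightarrow> real) \<Rightarrow> nat \<Rightarrow> real" where
  "ext_s b v k = (if k = 0 then 1 else if k \<le> b then v k else 0)"

definition ext0 :: "nat \<Rightarrow> (nat \<Rightarrow> real) \<Rightarrow> nat \<Rightarrow> real" where
  "ext0 b v k = (if 1 \<le> k \<and> k \<le> b then v k else 0)"

definition mf_rhs :: "real \<Rightarrow> nat \<Rightarrow> (nat \<Rightarrow> real) \<Rightarrow> nat \<Rightarrow> real" where
  "mf_rhs lam b s k =
     lam * ((ext_s b s (k - 1))\<^sup>2 - (ext_s b s k)\<^sup>2) - (ext_s b s k - ext_s b s (k + 1))"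

end

theory Submission
  imports Defs
begin

text \<open>The linearised system is u' = M(t) u with a tridiagonal M(t) whose off-diagonal entries
  2 lam s_(k-1)(t) and 1 are nonnegative and whose column sums are nonpositive. For such a
  matrix, pairing u' with a sign vector of u gives a nonpositive number, so the 1-norm of u has
  a nonpositive right derivative everywhere and therefore never increases. The initial
  perturbation N(z - y) is a signed unit vector, of 1-norm one.\<close>

lemma continuous_le_if_locally_right_nonincreasing:
  fixes g :: "real \<Rightarrow> real"
  assumes "a \<le> b" and cont: "continuous_on {a..b} g"
    and local: "\<And>t. a \<le> t \<Longrightarrow> t < b \<Longrightarrow> \<exists>d>0. \<forall>h>0. h < d \<longrightarrow> g (t + h) \<le> g t"
  shows "g b \<le> g a"
proof -
  define K where "K = {a..b} \<inter> g -` {..g a}"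
  have "closed K"
    unfolding K_def by (rule continuous_closed_preimage[OF cont]) auto
  moreover have "a \<in> K" "bdd_above K"
    using \<open>a \<le> b\<close> by (auto simp: K_def intro: bdd_aboveI[of _ b])
  ultimately have cK: "Sup K \<in> K"
    by (intro closed_contains_Sup) auto
  show ?thesis
  proof (cases "Sup K = b")
    case True
    then show ?thesis using cK by (simp add: K_def)
  next
    case False
    with cK have c: "a \<le> Sup K" "Sup K < b" by (auto simp: K_def)
    then obtain d where "d > 0" and d: "\<And>h. h > 0 \<Longrightarrow> h < d \<Longrightarrow> g (Sup K + h) \<le> g (Sup K)"
      using local by blast
    define h where "h = min (d / 2) ((b - Sup K) / 2)"
    have h: "0 < h" "h < d" "Sup K + h < b"
      using \<open>d > 0\<close> c by (auto simp: h_def min_def field_simps)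
    with d cK c have "Sup K + h \<in> K"
      by (fastforce simp: K_def)
    then have "Sup K + h \<le> Sup K"
      using \<open>bdd_above K\<close> by (rule cSup_upper)
    with h show ?thesis by simp
  qed
qed

lemma continuous_le_if_right_derivative_nonpos:
  fixes g :: "real \<Rightarrow> real"
  assumes "a \<le> b" and cont: "continuous_on {a..b} g"
    and deriv: "\<And>t. a \<le> t \<Longrightarrow> t < b \<Longrightarrow> \<exists>D\<le>0. (g has_real_derivative D) (at_right t)"
  shows "g b \<le> g a"
proof (rule field_le_epsilon)
  \<comment> \<open>Tilting g by a small slope makes its right derivatives strictly negative.\<close>
  fix e :: real
  assume "e > 0"
  define \<epsilon> where "\<epsilon> = e / (b - a + 1)"
  have "\<epsilon> > 0" using \<open>e > 0\<close> \<open>a \<le> b\<close> by (simp add: \<epsilon>_def)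
  have "g b - \<epsilon> * b \<le> g a - \<epsilon> * a"
  proof (rule continuous_le_if_locally_right_nonincreasing[OF \<open>a \<le> b\<close>])
    show "continuous_on {a..b} (\<lambda>s. g s - \<epsilon> * s)"
      by (intro continuous_intros cont)
    fix t assume "a \<le> t" "t < b"
    then obtain D where "D \<le> 0" "(g has_real_derivative D) (at_right t)"
      using deriv by blast
    then have "((\<lambda>s. g s - \<epsilon> * s) has_real_derivative D - \<epsilon>) (at_right t)"
      by (auto intro!: derivative_eq_intros)
    from has_real_derivative_neg_dec_right[OF this] \<open>D \<le> 0\<close> \<open>\<epsilon> > 0\<close>
    show "\<exists>d>0. \<forall>h>0. h < d \<longrightarrow> g (t + h) - \<epsilon> * (t + h) \<le> g t - \<epsilon> * t"
      by (auto intro: less_imp_le)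
  qed
  then have "g b \<le> g a + \<epsilon> * (b - a)" by (simp add: algebra_simps)
  also have "\<epsilon> * (b - a) \<le> e"
    using \<open>e > 0\<close> \<open>a \<le> b\<close> by (simp add: \<epsilon>_def field_simps)
  finally show "g b \<le> g a + e" by simp
qed

lemma has_real_derivative_abs_at_right:
  fixes u :: "real \<Rightarrow> real"
  assumes deriv: "(u has_real_derivative d) (at_right t)"
  shows "((\<lambda>s. \<bar>u s\<bar>) has_real_derivative (if u t = 0 then \<bar>d\<bar> else sgn (u t) * d)) (at_right t)"
proof -
  have quotient: "((\<lambda>s. (u s - u t) / (s - t)) \<longlongrightarrow> d) (at_right t)"
    using deriv by (simp add: has_field_derivative_iff)
  show ?thesis
  proof (cases "u t = 0")
    case True
    have "eventually (\<lambda>s. \<bar>(u s - u t) / (s - t)\<bar> = (\<bar>u s\<bar> - \<bar>u t\<bar>) / (s - t)) (at_right t)"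
      using eventually_at_right_less[of t] by eventually_elim (simp add: True abs_divide)
    with tendsto_rabs[OF quotient]
    have "((\<lambda>s. (\<bar>u s\<bar> - \<bar>u t\<bar>) / (s - t)) \<longlongrightarrow> \<bar>d\<bar>) (at_right t)"
      by (rule Lim_transform_eventually)
    with True show ?thesis by (simp add: has_field_derivative_iff)
  next
    case False
    have "(u \<longlongrightarrow> u t) (at_right t)"
      using DERIV_continuous[OF deriv] by (simp add: continuous_within)
    from tendstoD[OF this] False have "eventually (\<lambda>s. \<bar>u s - u t\<bar> < \<bar>u t\<bar>) (at_right t)"
      by (simp add: dist_real_def)
    moreover have "\<bar>v\<bar> = sgn (u t) * v" if "\<bar>v - u t\<bar> < \<bar>u t\<bar>" for v
      using False that by (auto simp: sgn_if abs_if)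
    ultimately have "eventually (\<lambda>s. sgn (u t) * ((u s - u t) / (s - t)) = (\<bar>u s\<bar> - \<bar>u t\<bar>) / (s - t)) (at_right t)"
      using False by (auto elim!: eventually_mono simp: sgn_if diff_divide_distrib)
    with tendsto_mult_left[OF quotient]
    have "((\<lambda>s. (\<bar>u s\<bar> - \<bar>u t\<bar>) / (s - t)) \<longlongrightarrow> sgn (u t) * d) (at_right t)"
      by (rule Lim_transform_eventually)
    with False show ?thesis by (simp add: has_field_derivative_iff)
  qed
qed

lemma sum_shift_down_le:
  fixes f :: "nat \<Rightarrow> real"
  assumes "f 0 = 0" and "0 \<le> f b"
  shows "(\<Sum>k=1..b. f (k - 1)) \<le> (\<Sum>k=1..b. f k)"
proof -
  have "(\<Sum>k=1..n. f (k - 1)) + f n = (\<Sum>k=1..n. f k)" for n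
    using \<open>f 0 = 0\<close> by (induction n) auto
  from this[of b] \<open>0 \<le> f b\<close> show ?thesis by linarith
qed

lemma sum_shift_up_le:
  fixes f :: "nat \<Rightarrow> real"
  assumes "f (b + 1) = 0" and "0 \<le> f 1"
  shows "(\<Sum>k=1..b. f (k + 1)) \<le> (\<Sum>k=1..b. f k)"
proof -
  have "(\<Sum>k=1..n. f (k + 1)) + f 1 = (\<Sum>k=1..n. f k) + f (n + 1)" for n
    by (induction n) auto
  from this[of b] assms show ?thesis by linarith
qed

lemma sign_weighted_tridiagonal_sum_nonpos:
  fixes u \<sigma> A :: "nat \<Rightarrow> real"
  assumes sign: "\<And>k. k \<in> {1..b} \<Longrightarrow> \<sigma> k * u k = \<bar>u k\<bar>"
    and bounded: "\<And>k. k \<in> {1..b} \<Longrightarrow> \<bar>\<sigma> k\<bar> \<le> 1"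
    and nonneg: "\<And>k. k \<in> {1..b} \<Longrightarrow> 0 \<le> A k"
  shows "(\<Sum>k=1..b. \<sigma> k * (A (k - 1) * ext0 b u (k - 1) - A k * u k - u k + ext0 b u (k + 1))) \<le> 0"
proof -
  define g where "g j = \<bar>ext0 b u j\<bar>" for j
  define f where "f j = \<bar>A j * ext0 b u j\<bar>" for j
  have f_eq: "f k = A k * \<bar>u k\<bar>" and g_eq: "g k = \<bar>u k\<bar>" if "k \<in> {1..b}" for k
    using nonneg[OF that] that by (auto simp: f_def g_def ext0_def abs_mult)
  have weight: "\<sigma> k * v \<le> \<bar>v\<bar>" if "k \<in> {1..b}" for k v
  proof -
    have "\<sigma> k * v \<le> \<bar>\<sigma> k\<bar> * \<bar>v\<bar>" by (metis abs_ge_self abs_mult)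
    also have "\<dots> \<le> \<bar>v\<bar>" using bounded[OF that] by (simp add: mult_left_le_one_le)
    finally show ?thesis .
  qed
  have "(\<Sum>k=1..b. \<sigma> k * (A (k - 1) * ext0 b u (k - 1) - A k * u k - u k + ext0 b u (k + 1)))
      \<le> (\<Sum>k=1..b. f (k - 1) - f k - g k + g (k + 1))"
  proof (rule sum_mono)
    fix k assume k: "k \<in> {1..b}"
    have "\<sigma> k * (A (k - 1) * ext0 b u (k - 1)) \<le> f (k - 1)" "\<sigma> k * ext0 b u (k + 1) \<le> g (k + 1)"
      using weight[OF k] by (auto simp: f_def g_def)
    moreover have "\<sigma> k * (A k * u k) = f k" "\<sigma> k * u k = g k"
      using sign[OF k] f_eq[OF k] g_eq[OF k] by (simp_all add: algebra_simps)
    ultimately show "\<sigma> k * (A (k - 1) * ext0 b u (k - 1) - A k * u k - u k + ext0 b u (k + 1))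
        \<le> f (k - 1) - f k - g k + g (k + 1)"
      by (simp add: algebra_simps)
  qed
  also have "\<dots> = ((\<Sum>k=1..b. f (k - 1)) - (\<Sum>k=1..b. f k)) + ((\<Sum>k=1..b. g (k + 1)) - (\<Sum>k=1..b. g k))"
    by (simp add: sum.distrib sum_subtractf)
  also have "\<dots> \<le> 0"
    using sum_shift_down_le[of f b] sum_shift_up_le[of g b] by (simp add: f_def g_def ext0_def)
  finally show ?thesis .
qed

lemma l1_norm_nonincreasing_of_tridiagonal_system:
  fixes u A :: "real \<Rightarrow> nat \<Rightarrow> real"
  assumes nonneg: "\<And>t k. 0 \<le> t \<Longrightarrow> k \<in> {1..b} \<Longrightarrow> 0 \<le> A t k"
    and ode: "\<And>t k. 0 \<le> t \<Longrightarrow> k \<in> {1..b} \<Longrightarrow> ((\<lambda>\<tau>. u \<tau> k) has_real_derivative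
        A t (k - 1) * ext0 b (u t) (k - 1) - A t k * u t k - u t k + ext0 b (u t) (k + 1)) (at t within {0..})"
    and "0 \<le> T"
  shows "(\<Sum>k=1..b. \<bar>u T k\<bar>) \<le> (\<Sum>k=1..b. \<bar>u 0 k\<bar>)"
proof -
  define d where "d t k = A t (k - 1) * ext0 b (u t) (k - 1) - A t k * u t k - u t k + ext0 b (u t) (k + 1)"
    for t k
  define V where "V s = (\<Sum>k=1..b. \<bar>u s k\<bar>)" for s
  have deriv: "((\<lambda>\<tau>. u \<tau> k) has_real_derivative d t k) (at t within S)"
    if "0 \<le> t" "k \<in> {1..b}" "S \<subseteq> {0..}" for t k S
    using DERIV_subset[OF ode[OF that(1,2)] that(3)] by (simp add: d_def)
  have "continuous_on {0..T} (\<lambda>s. u s k)" if "k \<in> {1..b}" for k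
    by (rule DERIV_continuous_on[OF deriv]) (use that in auto)
  then have "continuous_on {0..T} V"
    unfolding V_def by (intro continuous_on_sum continuous_on_rabs)
  moreover have "\<exists>D\<le>0. (V has_real_derivative D) (at_right t)" if "0 \<le> t" for t
  proof (intro exI conjI)
    define \<sigma> where "\<sigma> k = (if u t k = 0 then sgn (d t k) else sgn (u t k))" for k
    have sgn_mult_self_abs: "sgn v * v = \<bar>v\<bar>" for v :: real
      by (simp add: abs_if sgn_if)
    have "{t<..} \<subseteq> {0..}" using \<open>0 \<le> t\<close> by auto
    have "((\<lambda>s. \<bar>u s k\<bar>) has_real_derivative \<sigma> k * d t k) (at_right t)" if "k \<in> {1..b}" for k
      using has_real_derivative_abs_at_right[OF deriv[OF \<open>0 \<le> t\<close> that \<open>{t<..} \<subseteq> {0..}\<close>]]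
      by (simp add: \<sigma>_def sgn_mult_self_abs split: if_splits)
    then show "(V has_real_derivative (\<Sum>k=1..b. \<sigma> k * d t k)) (at_right t)"
      unfolding V_def by (rule DERIV_sum)
    show "(\<Sum>k=1..b. \<sigma> k * d t k) \<le> 0"
      unfolding d_def using nonneg[OF \<open>0 \<le> t\<close>]
      by (intro sign_weighted_tridiagonal_sum_nonpos) (auto simp: \<sigma>_def sgn_mult_self_abs abs_sgn_eq)
  qed
  ultimately have "V T \<le> V 0"
    by (intro continuous_le_if_right_derivative_nonpos[OF \<open>0 \<le> T\<close>]) auto
  then show ?thesis by (simp add: V_def)
qed

theorem lemma19:
  fixes N b :: nat and \<gamma> \<alpha> lam :: real
    and sstar :: "nat \<Rightarrow> real"
    and x x1 :: "real \<Rightarrow> nat \<Rightarrow> real"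
    and z y :: "nat \<Rightarrow> real"
  assumes N_pos: "N \<ge> 1"
    and b_pos: "b \<ge> 1"
    and gamma: "0 < \<gamma>" "\<gamma> \<le> 1"
    and alpha: "\<alpha> > 0"
    and lam_def: "lam = 1 - \<gamma> / (real N powr \<alpha>)"
    and sstar_state: "\<forall>k\<in>{1..b}. 0 \<le> sstar k \<and> sstar k \<le> ext_s b sstar (k - 1)"
    and sstar_eq: "\<forall>k\<in>{1..b}. mf_rhs lam b sstar k = 0"
    and x_ode: "\<forall>t\<ge>0. \<forall>k\<in>{1..b}.
        ((\<lambda>\<tau>. x \<tau> k) has_real_derivative
           mf_rhs lam b (\<lambda>j. x t j + sstar j) k) (at t within {0..})"
    and x_nonneg: "\<forall>t\<ge>0. \<forall>k\<in>{1..b}. x t k + sstar k \<ge> 0"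
    and x1_ode: "\<forall>t\<ge>0. \<forall>k\<in>{1..b}.
        ((\<lambda>\<tau>. x1 \<tau> k) has_real_derivative
           2 * lam * (x t (k - 1) + sstar (k - 1)) * ext0 b (x1 t) (k - 1)
           - 2 * lam * (x t k + sstar k) * x1 t k
           - x1 t k + ext0 b (x1 t) (k + 1)) (at t within {0..})"
    and zy: "\<exists>j\<in>{1..b}. (z j - y j = 1 / real N \<or> z j - y j = - 1 / real N)
                 \<and> (\<forall>k\<in>{1..b}. k \<noteq> j \<longrightarrow> z k = y k)"
    and x1_init: "\<forall>k\<in>{1..b}. x1 0 k = real N * (z k - y k)"
  shows "\<forall>t\<ge>0. (\<Sum>k=1..b. \<bar>x1 t k\<bar>) \<le> (\<Sum>k=1..b. \<bar>x1 0 k\<bar>)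
          \<and> (\<Sum>k=1..b. \<bar>x1 0 k\<bar>) = 1"
  \<comment> \<open>Only lam \<ge> 0 and s(t) = x(t) + s* \<ge> 0 enter.\<close>
proof -
  have "real N powr \<alpha> \<ge> 1"
    using N_pos alpha by (intro ge_one_powr_ge_zero) auto
  then have "\<gamma> / real N powr \<alpha> \<le> 1"
    using gamma by (simp add: divide_le_eq)
  then have "0 \<le> lam"
    using lam_def by simp
  then have contraction: "(\<Sum>k=1..b. \<bar>x1 t k\<bar>) \<le> (\<Sum>k=1..b. \<bar>x1 0 k\<bar>)" if "0 \<le> t" for t
    using x_nonneg x1_ode
    by (intro l1_norm_nonincreasing_of_tridiagonal_system[where A = "\<lambda>t j. 2 * lam * (x t j + sstar j)", OF _ _ that])
       auto
  obtain j where j: "j \<in> {1..b}" "\<bar>x1 0 j\<bar> = 1" "\<And>k. k \<in> {1..b} \<Longrightarrow> k \<noteq> j \<Longrightarrow> x1 0 k = 0"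
    using zy x1_init N_pos by fastforce
  then have "(\<Sum>k=1..b. \<bar>x1 0 k\<bar>) = (\<Sum>k=1..b. if k = j then 1 else 0)"
    by (intro sum.cong) auto
  with j(1) have "(\<Sum>k=1..b. \<bar>x1 0 k\<bar>) = 1"
    by simp
  with contraction show ?thesis
    by simp
qed

end
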